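(* Let $G$ be a mixed signed, directed graph on vertices $\{1,\dots,n\}$ with $m$ directed edges, and let $\widetilde{G}$ be its augmented signed graph, with artificial vertices indexed $t_1,\dots,t_m$. Regard $k[\widetilde{G}]\subseteq k[x_1^{\pm1},\dots,x_n^{\pm1},t_1^{\pm1},\dots,t_m^{\pm1}]$ and $k[G]\subseteq k[x_1^{\pm1},\dots,x_n^{\pm1}]$, and let $k(\widetilde G)$, $k(G)$ be their fraction fields inside $k(x_1,\dots,x_n,t_1,\dots,t_m)$. Then $k(\widetilde{G})\cap k(x_1,\dots,x_n)=k(G)$.
   Context: $k$ is a field. A mixed signed, directed graph $G$ on vertex set $\{1,\dots,n\}$ has a set of signed edges $+ij$ or $-ij$ (loops $\pm ii$ allowed) and directed edges $(i,j)$ with $i\ne j$; between a pair of vertices any subset of $+ij,-ij,(i,j),(j,i)$ may occur. Define $\rho(\pm ij)=\pm(e_i+e_j)$ (so $\rho(\pm ii)=\pm2e_i$) and $\rho((i,j))=e_j-e_i$ in $\mathbb{R}^n$. The edge ring is $k[G]=k[x^a: a\in\rho(E(G))]$ with $x^a=\prod x_i^{a_i}$. The augmented signed graph $\widetilde G$ is the signed graph obtained by replacing each directed edge $(i,j)$ by a new (artificial) vertex $t_{(i,j)}$ and the two edges $-i\,t_{(i,j)}$ and $+t_{(i,j)}\,j$; its edge ring is defined in the same way using variables $x_1,\dots,x_n$ and $t_1,\dots,t_m$ for the artificial vertices. *)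

theory Defs
  imports "HOL-Library.Poly_Mapping"
begin

text \<open>Variables: Inl i is x_i (i in 1..n), Inr k is the artificial variable t_(k+1)
  attached to the k-th directed edge (0-based position in the list of directed edges).\<close>

type_synonym var = "nat + nat"
type_synonym expo = "var \<Rightarrow>\<^sub>0 int"
type_synonym 'k laurent = "expo \<Rightarrow>\<^sub>0 'k"

definition e :: "var \<Rightarrow> expo" where
  "e v = Poly_Mapping.single v 1"

definition monom :: "expo \<Rightarrow> 'k::field laurent" where
  "monom a = Poly_Mapping.single a 1"

text \<open>Signed edge: (True,i,j) is +ij, (False,i,j) is -ij; directed edge (i,j).\<close>
definition rho_signed :: "bool \<times> var \<times> var \<Rightarrow> expo" where
  "rho_signed s = (case s of (b, i, j) \<Rightarrow> (if b then e i + e j else - (e i + e j)))"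

definition rho_dir :: "nat \<times> nat \<Rightarrow> expo" where
  "rho_dir d = (case d of (i, j) \<Rightarrow> e (Inl j) - e (Inl i))"

inductive_set alg_gen :: "'k::field laurent set \<Rightarrow> 'k laurent set" for A where
  const: "Poly_Mapping.single 0 c \<in> alg_gen A"
| gen: "a \<in> A \<Longrightarrow> a \<in> alg_gen A"
| add: "p \<in> alg_gen A \<Longrightarrow> q \<in> alg_gen A \<Longrightarrow> p + q \<in> alg_gen A"
| mult: "p \<in> alg_gen A \<Longrightarrow> q \<in> alg_gen A \<Longrightarrow> p * q \<in> alg_gen A"

definition edge_ring :: "(bool \<times> nat \<times> nat) set \<Rightarrow> (nat \<times> nat) list \<Rightarrow> 'k::field laurent set" where
  "edge_ring S D = alg_gen ((\<lambda>(b,i,j). monom (rho_signed (b, Inl i, Inl j))) ` S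
                          \<union> (\<lambda>d. monom (rho_dir d)) ` set D)"

text \<open>Edge set of the augmented signed graph: each directed edge (i,j), at position k
  of D, is replaced by the artificial vertex t_k and edges -i t_k and +t_k j.\<close>
definition aug_edges :: "(bool \<times> nat \<times> nat) set \<Rightarrow> (nat \<times> nat) list \<Rightarrow> (bool \<times> var \<times> var) set" where
  "aug_edges S D = (\<lambda>(b,i,j). (b, Inl i, Inl j)) ` S
     \<union> {(False, Inl (fst (D ! k)), Inr k) | k. k < length D}
     \<union> {(True, Inr k, Inl (snd (D ! k))) | k. k < length D}"

definition aug_edge_ring :: "(bool \<times> nat \<times> nat) set \<Rightarrow> (nat \<times> nat) list \<Rightarrow> 'k::field laurent set" where
  "aug_edge_ring S D = alg_gen (monom ` rho_signed ` aug_edges S D)"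

definition poly_x :: "nat \<Rightarrow> 'k::field laurent set" where
  "poly_x n = alg_gen ((\<lambda>i. monom (e (Inl i))) ` {1..n})"

text \<open>Membership of the element f/g (g nonzero) of k(x_1..x_n,t_1..t_m) in the fraction
  field of a subring A, i.e. in {p/q | p q \<in> A, q \<noteq> 0}.\<close>
definition in_frac :: "'k::field laurent set \<Rightarrow> 'k laurent \<Rightarrow> 'k laurent \<Rightarrow> bool" where
  "in_frac A f g \<longleftrightarrow> (\<exists>p\<in>A. \<exists>q\<in>A. q \<noteq> 0 \<and> f * q = p * g)"

end

theory Submission
  imports Defs
begin

text \<open>Both edge rings are monomial algebras, so membership is decided exponent by exponent.
  Since k[G] contains only Laurent monomials in the x_i, clearing a monomial denominator puts
  k(G) inside k(x), and replacing each directed edge (i,j) by the product of -i t and +t j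
  shows k[G] \<subseteq> k[G~]. Conversely, let f/g = p/q with p, q in k[G~] and also f/g = p'/q'
  with p', q' in k[x]. Then p q' = p' q, and since p', q' do not involve the t-variables, the
  components of p and q of one fixed t-degree still represent f/g. On a component of t-degree
  (d_1,...,d_m), multiplying by the inverse of the monomial \<Prod> (t_k x_{head k})^{d_k} turns
  every exponent of k[G~] into one of k[G]: the generator -i t_k becomes the directed edge
  x_{head k}/x_i, and +t_k x_{head k} becomes 1.\<close>

text \<open>Only needed so that the library's \<open>idom\<close> instance applies to Laurent polynomials: it
  orders the exponent vectors, and for that it requires a linear order on the variables.\<close>
instantiation sum :: (linorder, linorder) linorder
begin

definition less_eq_sum :: "'a + 'b \<Rightarrow> 'a + 'b \<Rightarrow> bool" where
  "less_eq_sum x y = (case x of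
      Inl a \<Rightarrow> (case y of Inl b \<Rightarrow> a \<le> b | Inr _ \<Rightarrow> True)
    | Inr a \<Rightarrow> (case y of Inl _ \<Rightarrow> False | Inr b \<Rightarrow> a \<le> b))"

definition less_sum :: "'a + 'b \<Rightarrow> 'a + 'b \<Rightarrow> bool" where
  "less_sum x y = (x \<le> y \<and> \<not> y \<le> x)"

instance
  by standard (auto simp: less_eq_sum_def less_sum_def split: sum.splits)

end

section \<open>Monomial algebras\<close>

lemma monom_add: "monom (a + b) = (monom a * monom b :: 'k::field laurent)"
  by (simp add: monom_def mult_single)

lemma monom_zero: "monom 0 = (1 :: 'k::field laurent)"
  by (simp add: monom_def)

lemma monom_nonzero: "monom a \<noteq> (0 :: 'k::field laurent)"
  by (metis lookup_single_eq lookup_zero monom_def zero_neq_one)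

lemma alg_gen_one: "1 \<in> alg_gen A"
  using alg_gen.const[of 1 A] by simp

lemma alg_gen_sum: "(\<And>i. i \<in> I \<Longrightarrow> h i \<in> alg_gen A) \<Longrightarrow> sum h I \<in> alg_gen A"
  by (induction I rule: infinite_finite_induct)
    (auto intro: alg_gen.add alg_gen.const[of 0, simplified])

inductive_set monoid_gen :: "'a::monoid_add set \<Rightarrow> 'a set" for A where
  zero: "0 \<in> monoid_gen A"
| gen: "a \<in> A \<Longrightarrow> a \<in> monoid_gen A"
| add: "a \<in> monoid_gen A \<Longrightarrow> b \<in> monoid_gen A \<Longrightarrow> a + b \<in> monoid_gen A"

lemma monoid_gen_hom:
  assumes "\<And>a b. h (a + b) = h a + h b" and "h 0 = 0"
    and "\<And>a. a \<in> A \<Longrightarrow> h a \<in> monoid_gen B"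
    and "a \<in> monoid_gen A"
  shows "h a \<in> monoid_gen B"
  using assms(4) by induction (auto simp: assms(1-3) intro: monoid_gen.intros)

lemma monoid_gen_subset: "A \<subseteq> monoid_gen B \<Longrightarrow> a \<in> monoid_gen A \<Longrightarrow> a \<in> monoid_gen B"
  using monoid_gen_hom[of id A B a] by auto

lemma poly_mapping_sum_singles:
  "r = (\<Sum>a\<in>Poly_Mapping.keys r. Poly_Mapping.single a (Poly_Mapping.lookup r a))"
  by (rule poly_mapping_eqI) (simp add: lookup_sum lookup_single when_def in_keys_iff)

lemma mem_alg_gen_monom_iff:
  "(r :: 'k::field laurent) \<in> alg_gen (monom ` A) \<longleftrightarrow> Poly_Mapping.keys r \<subseteq> monoid_gen A"
proof
  assume "r \<in> alg_gen (monom ` A)"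
  then show "Poly_Mapping.keys r \<subseteq> monoid_gen A"
  proof induction
    case (add p q)
    then show ?case
      using keys_add[of p q] by blast
  next
    case (mult p q)
    then show ?case
      using keys_mult[of p q] by (blast intro: monoid_gen.add)
  qed (auto simp: monom_def intro: monoid_gen.intros)
next
  have monom_mem: "(monom a :: 'k laurent) \<in> alg_gen (monom ` A)" if "a \<in> monoid_gen A" for a
    using that
    by induction (auto simp: monom_zero monom_add alg_gen_one intro: alg_gen.gen alg_gen.mult)
  have single_mem: "(Poly_Mapping.single a c :: 'k laurent) \<in> alg_gen (monom ` A)"
    if "a \<in> monoid_gen A" for a c
  proof -
    have "(Poly_Mapping.single a c :: 'k laurent) = Poly_Mapping.single 0 c * monom a"
      by (simp add: monom_def mult_single)
    then show ?thesis
      using alg_gen.mult[OF alg_gen.const monom_mem[OF that]] by simp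
  qed
  assume "Poly_Mapping.keys r \<subseteq> monoid_gen A"
  then show "r \<in> alg_gen (monom ` A)"
    by (subst poly_mapping_sum_singles) (auto intro!: alg_gen_sum single_mem)
qed

lemma alg_gen_monomial_multiplier:
  assumes "\<And>x. x \<in> A \<Longrightarrow> \<exists>c. monom c \<in> alg_gen B \<and> monom c * x \<in> alg_gen B"
    and "p \<in> alg_gen A"
  shows "\<exists>c. monom c \<in> alg_gen B \<and> monom c * (p :: 'k::field laurent) \<in> alg_gen B"
  using assms(2)
proof induction
  case (const c)
  then show ?case
    by (metis alg_gen.const alg_gen_one monom_zero mult_1)
next
  case (gen a)
  then show ?case
    by (rule assms(1))
next
  case (add p q)
  then obtain c d where "monom c \<in> alg_gen B" "monom c * p \<in> alg_gen B"
    and "monom d \<in> alg_gen B" "monom d * q \<in> alg_gen B"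
    by blast
  moreover have "monom (c + d) * (p + q) = monom d * (monom c * p) + monom c * (monom d * q)"
    by (simp add: monom_add algebra_simps)
  ultimately show ?case
    by (metis alg_gen.add alg_gen.mult monom_add)
next
  case (mult p q)
  then obtain c d where "monom c \<in> alg_gen B" "monom c * p \<in> alg_gen B"
    and "monom d \<in> alg_gen B" "monom d * q \<in> alg_gen B"
    by blast
  moreover have "monom (c + d) * (p * q) = (monom c * p) * (monom d * q)"
    by (simp add: monom_add algebra_simps)
  ultimately show ?case
    by (metis alg_gen.mult monom_add)
qed

lemma in_frac_mono: "A \<subseteq> B \<Longrightarrow> in_frac A f g \<Longrightarrow> in_frac B f g"
  unfolding in_frac_def by blast

lemma in_frac_monom_mult:
  assumes "monom c * p \<in> A" and "monom c * q \<in> A" and "q \<noteq> 0" and "f * q = p * g"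
  shows "in_frac A f g"
proof -
  have "f * (monom c * q) = (monom c * p) * g"
    using assms(4) by (metis mult.assoc mult.left_commute)
  moreover have "monom c * q \<noteq> 0"
    using assms(3) monom_nonzero by simp
  ultimately show ?thesis
    unfolding in_frac_def using assms(1,2) by blast
qed

lift_definition restrict_keys :: "('a \<Rightarrow> bool) \<Rightarrow> ('a \<Rightarrow>\<^sub>0 'b::zero) \<Rightarrow> 'a \<Rightarrow>\<^sub>0 'b"
  is "\<lambda>P r a. if P a then r a else 0"
  by (erule finite_subset[rotated]) auto

lemma lookup_restrict_keys:
  "Poly_Mapping.lookup (restrict_keys P r) a = (if P a then Poly_Mapping.lookup r a else 0)"
  by transfer simp

lemma keys_restrict_keys: "Poly_Mapping.keys (restrict_keys P r) = {a \<in> Poly_Mapping.keys r. P a}"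
  by (auto simp: in_keys_iff lookup_restrict_keys split: if_splits)

lemma restrict_keys_add: "restrict_keys P (r + s) = restrict_keys P r + restrict_keys P s"
  by (rule poly_mapping_eqI) (simp add: lookup_restrict_keys lookup_add)

lemma restrict_keys_mult_invariant:
  fixes s :: "'a::monoid_add \<Rightarrow>\<^sub>0 'b::semiring_0"
  assumes invariant: "\<And>a b. b \<in> Poly_Mapping.keys s \<Longrightarrow> P (a + b) = P a"
  shows "restrict_keys P (r * s) = restrict_keys P r * s"
proof -
  \<comment> \<open>Multiplying by s never moves a key into or out of P.\<close>
  have keep: "restrict_keys P (restrict_keys P r * s) = restrict_keys P r * s"
    by (rule poly_mapping_eqI)
      (use keys_mult[of "restrict_keys P r" s] in
        \<open>force simp: lookup_restrict_keys in_keys_iff keys_restrict_keys invariant\<close>)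
  have drop: "restrict_keys P (restrict_keys (Not \<circ> P) r * s) = 0"
    by (rule poly_mapping_eqI)
      (use keys_mult[of "restrict_keys (Not \<circ> P) r" s] in
        \<open>force simp: lookup_restrict_keys in_keys_iff keys_restrict_keys invariant\<close>)
  have "r = restrict_keys P r + restrict_keys (Not \<circ> P) r"
    by (rule poly_mapping_eqI) (simp add: lookup_restrict_keys lookup_add)
  then have "restrict_keys P (r * s)
      = restrict_keys P (restrict_keys P r * s) + restrict_keys P (restrict_keys (Not \<circ> P) r * s)"
    by (metis distrib_right restrict_keys_add)
  then show ?thesis
    using keep drop by simp
qed

section \<open>The edge ring and the augmented edge ring\<close>

definition edge_exponents :: "(bool \<times> nat \<times> nat) set \<Rightarrow> (nat \<times> nat) list \<Rightarrow> expo set" where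
  "edge_exponents S D = (\<lambda>(b,i,j). rho_signed (b, Inl i, Inl j)) ` S \<union> rho_dir ` set D"

lemma edge_ring_eq: "(edge_ring S D :: 'k::field laurent set) = alg_gen (monom ` edge_exponents S D)"
proof -
  have "((\<lambda>(b,i,j). monom (rho_signed (b, Inl i, Inl j))) ` S :: 'k laurent set)
        = monom ` (\<lambda>(b,i,j). rho_signed (b, Inl i, Inl j)) ` S"
    unfolding image_image by (rule image_cong) auto
  moreover have "((\<lambda>d. monom (rho_dir d)) ` set D :: 'k laurent set) = monom ` rho_dir ` set D"
    by (simp add: image_image)
  ultimately show ?thesis
    unfolding edge_ring_def edge_exponents_def image_Un by simp
qed

lemma mem_edge_ring_iff:
  "(r :: 'k::field laurent) \<in> edge_ring S D \<longleftrightarrow> Poly_Mapping.keys r \<subseteq> monoid_gen (edge_exponents S D)"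
  by (simp add: edge_ring_eq mem_alg_gen_monom_iff)

lemma mem_aug_edge_ring_iff:
  "(r :: 'k::field laurent) \<in> aug_edge_ring S D
     \<longleftrightarrow> Poly_Mapping.keys r \<subseteq> monoid_gen (rho_signed ` aug_edges S D)"
  by (simp add: aug_edge_ring_def mem_alg_gen_monom_iff)

lemma aug_edges_dir:
  assumes "k < length D"
  shows "(False, Inl (fst (D ! k)), Inr k) \<in> aug_edges S D"
    and "(True, Inr k, Inl (snd (D ! k))) \<in> aug_edges S D"
  using assms unfolding aug_edges_def by blast+

lemma edge_exponents_subset_aug: "edge_exponents S D \<subseteq> monoid_gen (rho_signed ` aug_edges S D)"
proof
  fix a assume "a \<in> edge_exponents S D"
  then consider (signed) b i j where "(b, i, j) \<in> S" "a = rho_signed (b, Inl i, Inl j)"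
    | (directed) k where "k < length D" "a = rho_dir (D ! k)"
    unfolding edge_exponents_def by (auto simp: in_set_conv_nth)
  then show "a \<in> monoid_gen (rho_signed ` aug_edges S D)"
  proof cases
    case signed
    then have "(b, Inl i, Inl j) \<in> aug_edges S D"
      unfolding aug_edges_def by (intro UnI1 image_eqI[where x="(b, i, j)"]) auto
    then show ?thesis
      using signed by (auto intro: monoid_gen.gen)
  next
    case directed
    have "a = rho_signed (False, Inl (fst (D ! k)), Inr k) + rho_signed (True, Inr k, Inl (snd (D ! k)))"
      using directed by (simp add: rho_signed_def rho_dir_def split: prod.splits)
    then show ?thesis
      using aug_edges_dir[OF directed(1), of S] by (auto intro: monoid_gen.gen monoid_gen.add)
  qed
qed

lemma edge_ring_subset_aug_edge_ring: "(edge_ring S D :: 'k::field laurent set) \<subseteq> aug_edge_ring S D"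
  using monoid_gen_subset[OF edge_exponents_subset_aug, of _ S D]
  unfolding subset_iff mem_edge_ring_iff mem_aug_edge_ring_iff by blast

section \<open>Fractions of the edge ring lie in k(x)\<close>

lemma monom_x_mem_poly_x: "i \<in> {1..n} \<Longrightarrow> (monom (e (Inl i)) :: 'k::field laurent) \<in> poly_x n"
  unfolding poly_x_def by (auto intro: alg_gen.gen)

lemma edge_ring_monomial_multiplier:
  assumes "\<forall>(b,i,j)\<in>S. i \<in> {1..n} \<and> j \<in> {1..n}"
    and "\<forall>(i,j)\<in>set D. i \<in> {1..n} \<and> j \<in> {1..n}"
    and "(p :: 'k::field laurent) \<in> edge_ring S D"
  shows "\<exists>c. (monom c :: 'k laurent) \<in> poly_x n \<and> monom c * p \<in> poly_x n"
proof -
  have "\<exists>c. (monom c :: 'k laurent) \<in> poly_x n \<and> monom c * x \<in> poly_x n"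
    if "x \<in> (\<lambda>(b,i,j). monom (rho_signed (b, Inl i, Inl j))) ` S \<union> (\<lambda>d. monom (rho_dir d)) ` set D"
    for x :: "'k laurent"
  proof -
    from that consider (signed) b i j where "(b, i, j) \<in> S" "x = monom (rho_signed (b, Inl i, Inl j))"
      | (directed) i j where "(i, j) \<in> set D" "x = monom (rho_dir (i, j))"
      by auto
    then show ?thesis
    proof cases
      case signed
      then have "i \<in> {1..n}" "j \<in> {1..n}"
        using assms(1) by auto
      then have xij: "monom (e (Inl i) + e (Inl j)) \<in> (poly_x n :: 'k laurent set)"
        unfolding poly_x_def monom_add by (intro alg_gen.mult alg_gen.gen) auto
      show ?thesis
      proof (cases b)
        case True
        then have "monom 0 * x = monom (e (Inl i) + e (Inl j))"
          using signed by (simp add: rho_signed_def monom_zero)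
        moreover have "monom 0 \<in> (poly_x n :: 'k laurent set)"
          unfolding poly_x_def monom_zero by (rule alg_gen_one)
        ultimately show ?thesis
          using xij by (intro exI[of _ 0]) simp
      next
        case False
        then have "monom (e (Inl i) + e (Inl j)) * x = 1"
          using signed by (simp add: rho_signed_def monom_add[symmetric] monom_zero)
        moreover have "1 \<in> (poly_x n :: 'k laurent set)"
          unfolding poly_x_def by (rule alg_gen_one)
        ultimately show ?thesis
          using xij by (intro exI[of _ "e (Inl i) + e (Inl j)"]) simp
      qed
    next
      case directed
      then have "i \<in> {1..n}" "j \<in> {1..n}"
        using assms(2) by auto
      moreover have "monom (e (Inl i)) * x = monom (e (Inl j))"
        using directed by (simp add: rho_dir_def monom_add[symmetric])
      ultimately show ?thesis
        using monom_x_mem_poly_x by metis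
    qed
  qed
  then show ?thesis
    unfolding poly_x_def by (rule alg_gen_monomial_multiplier[OF _ assms(3)[unfolded edge_ring_def]])
qed

lemma in_frac_poly_x_of_edge_ring:
  assumes "\<forall>(b,i,j)\<in>S. i \<in> {1..n} \<and> j \<in> {1..n}"
    and "\<forall>(i,j)\<in>set D. i \<in> {1..n} \<and> j \<in> {1..n}"
    and "in_frac (edge_ring S D) f (g :: 'k::field laurent)"
  shows "in_frac (poly_x n) f g"
proof -
  obtain p q where pq: "p \<in> edge_ring S D" "q \<in> edge_ring S D" "q \<noteq> 0" "f * q = p * g"
    using assms(3) unfolding in_frac_def by blast
  obtain c d where c: "(monom c :: 'k laurent) \<in> poly_x n" "monom c * p \<in> poly_x n"
    and d: "(monom d :: 'k laurent) \<in> poly_x n" "monom d * q \<in> poly_x n"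
    using edge_ring_monomial_multiplier[OF assms(1,2)] pq(1,2) by meson
  have shift: "monom (c + d) * p = monom d * (monom c * p)" "monom (c + d) * q = monom c * (monom d * q)"
    by (simp_all add: monom_add ac_simps)
  have "monom (c + d) * p \<in> poly_x n" "monom (c + d) * q \<in> poly_x n"
    unfolding shift using c d unfolding poly_x_def by (auto intro: alg_gen.mult)
  then show ?thesis
    using pq(3,4) by (rule in_frac_monom_mult)
qed

section \<open>Homogeneous components in the t-variables\<close>

definition t_degree :: "expo \<Rightarrow> nat \<Rightarrow> int" where
  "t_degree a k = Poly_Mapping.lookup a (Inr k)"

lemma t_degree_add: "t_degree (a + b) k = t_degree a k + t_degree b k"
  by (simp add: t_degree_def lookup_add)

lemma t_degree_poly_x:
  assumes "(r :: 'k::field laurent) \<in> poly_x n" and "a \<in> Poly_Mapping.keys r"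
  shows "t_degree a k = 0"
proof -
  have "poly_x n = (alg_gen (monom ` (\<lambda>i. e (Inl i)) ` {1..n}) :: 'k laurent set)"
    unfolding poly_x_def image_image ..
  then have "a \<in> monoid_gen ((\<lambda>i. e (Inl i)) ` {1..n})"
    using assms mem_alg_gen_monom_iff by blast
  then show ?thesis
    by induction (auto simp: t_degree_add, auto simp: t_degree_def e_def lookup_single)
qed

lemma in_frac_t_homogeneous:
  fixes d :: "nat \<Rightarrow> int"
  assumes "q \<noteq> 0" "f * q = p * g" and "p' \<in> poly_x n" "q' \<in> poly_x n" "q' \<noteq> 0" "f * q' = p' * g"
    and "g \<noteq> (0 :: 'k::field laurent)"
  defines "P \<equiv> \<lambda>a. t_degree a = d"
  shows "f * restrict_keys P q = restrict_keys P p * g"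
proof -
  have invariant: "P (a + b) = P a" if "b \<in> Poly_Mapping.keys s" "s \<in> poly_x n" for a b s
    using t_degree_poly_x[OF that(2,1)] by (simp add: P_def fun_eq_iff t_degree_add)
  have "g * (p * q') = (f * q) * q'"
    using assms(2) by (simp add: ac_simps)
  also have "\<dots> = q * (f * q')"
    by (simp add: ac_simps)
  also have "\<dots> = g * (q * p')"
    using assms(6) by (simp add: ac_simps)
  finally have "p * q' = q * p'"
    using assms(7) by simp
  then have components: "restrict_keys P p * q' = restrict_keys P q * p'"
    using restrict_keys_mult_invariant[of q' P] restrict_keys_mult_invariant[of p' P]
      invariant assms(3,4) by metis
  have "q' * (f * restrict_keys P q) = (f * q') * restrict_keys P q"
    by (simp add: ac_simps)
  also have "\<dots> = q' * (restrict_keys P p * g)"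
    using assms(6) components by (simp add: ac_simps)
  finally show ?thesis
    using assms(5) by simp
qed

text \<open>The exponent of \<open>\<Prod>\<^sub>k (t\<^sub>k x\<^bsub>head k\<^esub>)\<^bsup>a(t\<^sub>k)\<^esup>\<close>; subtracting it kills every
  t-variable and maps exponents of k[G~] to exponents of k[G].\<close>
definition head_shift :: "(nat \<times> nat) list \<Rightarrow> expo \<Rightarrow> expo" where
  "head_shift D a = (\<Sum>k<length D. Poly_Mapping.single (Inr k) (t_degree a k)
       + Poly_Mapping.single (Inl (snd (D ! k))) (t_degree a k))"

lemma head_shift_add: "head_shift D (a + b) = head_shift D a + head_shift D b"
  by (simp add: head_shift_def t_degree_add single_add sum.distrib algebra_simps)

lemma head_shift_diff: "head_shift D (a - b) = head_shift D a - head_shift D b"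
  by (simp add: head_shift_def t_degree_def lookup_minus single_diff sum_subtractf algebra_simps)

lemma head_shift_uminus: "head_shift D (- a) = - head_shift D a"
  using head_shift_diff[of D 0 a] by (simp add: head_shift_def t_degree_def)

lemma head_shift_e_Inl: "head_shift D (e (Inl i)) = 0"
  by (simp add: head_shift_def t_degree_def e_def lookup_single)

lemma head_shift_e_Inr:
  assumes "k < length D"
  shows "head_shift D (e (Inr k)) = e (Inr k) + e (Inl (snd (D ! k)))"
proof -
  have "head_shift D (e (Inr k))
      = (\<Sum>k'<length D. if k' = k then e (Inr k) + e (Inl (snd (D ! k))) else 0)"
    unfolding head_shift_def by (rule sum.cong) (auto simp: t_degree_def e_def lookup_single)
  then show ?thesis
    using assms by simp
qed

lemma minus_head_shift_mem_edge_exponents: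
  assumes "a \<in> monoid_gen (rho_signed ` aug_edges S D)"
  shows "a - head_shift D a \<in> monoid_gen (edge_exponents S D)"
proof (rule monoid_gen_hom[OF _ _ _ assms])
  fix a b :: expo
  show "a + b - head_shift D (a + b) = (a - head_shift D a) + (b - head_shift D b)"
    by (simp add: head_shift_add)
next
  show "0 - head_shift D 0 = (0 :: expo)"
    using head_shift_add[of D 0 0] by simp
next
  fix a assume "a \<in> rho_signed ` aug_edges S D"
  then consider (signed) b i j where "(b, i, j) \<in> S" "a = rho_signed (b, Inl i, Inl j)"
    | (tail) k where "k < length D" "a = rho_signed (False, Inl (fst (D ! k)), Inr k)"
    | (head) k where "k < length D" "a = rho_signed (True, Inr k, Inl (snd (D ! k)))"
    unfolding aug_edges_def by (elim imageE UnE CollectE exE conjE) auto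
  then show "a - head_shift D a \<in> monoid_gen (edge_exponents S D)"
  proof cases
    case signed
    then have "a \<in> edge_exponents S D"
      unfolding edge_exponents_def by force
    moreover have "head_shift D a = 0"
      using signed
      by (simp add: rho_signed_def head_shift_add head_shift_diff head_shift_uminus head_shift_e_Inl)
    ultimately show ?thesis
      by (simp add: monoid_gen.gen)
  next
    case tail
    then have "a - head_shift D a = rho_dir (D ! k)"
      by (simp add: rho_signed_def rho_dir_def head_shift_add head_shift_diff head_shift_uminus
          head_shift_e_Inl head_shift_e_Inr split: prod.splits)
    then show ?thesis
      using tail(1) unfolding edge_exponents_def by (auto intro: monoid_gen.gen)
  next
    case head
    then have "a - head_shift D a = 0"
      by (simp add: rho_signed_def head_shift_add head_shift_e_Inl head_shift_e_Inr)
    then show ?thesis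
      by (simp add: monoid_gen.zero)
  qed
qed

lemma t_homogeneous_component_shift_mem_edge_ring:
  assumes "(r :: 'k::field laurent) \<in> aug_edge_ring S D"
  shows "monom (- head_shift D a0) * restrict_keys (\<lambda>a. t_degree a = t_degree a0) r \<in> edge_ring S D"
  unfolding mem_edge_ring_iff
proof
  fix x assume "x \<in> Poly_Mapping.keys (monom (- head_shift D a0) * restrict_keys (\<lambda>a. t_degree a = t_degree a0) r)"
  then have "x \<in> {a + b | a b. a \<in> Poly_Mapping.keys (monom (- head_shift D a0) :: 'k laurent)
      \<and> b \<in> Poly_Mapping.keys (restrict_keys (\<lambda>a. t_degree a = t_degree a0) r)}"
    using keys_mult by blast
  then obtain a where a: "x = - head_shift D a0 + a" "a \<in> Poly_Mapping.keys r" "t_degree a = t_degree a0"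
    by (auto simp: monom_def keys_restrict_keys)
  have "head_shift D a = head_shift D a0"
    using a(3) by (simp add: head_shift_def)
  then have "x = a - head_shift D a"
    using a(1) by simp
  moreover have "a - head_shift D a \<in> monoid_gen (edge_exponents S D)"
    using a(2) assms by (intro minus_head_shift_mem_edge_exponents) (auto simp: mem_aug_edge_ring_iff)
  ultimately show "x \<in> monoid_gen (edge_exponents S D)"
    by simp
qed

lemma in_frac_edge_ring_of_aug_and_poly_x:
  assumes "in_frac (aug_edge_ring S D) f g" and "in_frac (poly_x n) f g" and "g \<noteq> (0 :: 'k::field laurent)"
  shows "in_frac (edge_ring S D) f g"
proof -
  obtain p q p' q' where pq: "p \<in> aug_edge_ring S D" "q \<in> aug_edge_ring S D" "q \<noteq> 0" "f * q = p * g"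
    and pq': "p' \<in> poly_x n" "q' \<in> poly_x n" "q' \<noteq> 0" "f * q' = p' * g"
    using assms(1,2) unfolding in_frac_def by blast
  obtain a0 where a0: "a0 \<in> Poly_Mapping.keys q"
    using pq(3) by (metis all_not_in_conv keys_eq_empty)
  define P where "P = (\<lambda>a. t_degree a = t_degree a0)"
  have "Poly_Mapping.lookup (restrict_keys P q) a0 \<noteq> 0"
    using a0 by (simp add: P_def lookup_restrict_keys in_keys_iff)
  then have "restrict_keys P q \<noteq> 0"
    by auto
  moreover have "f * restrict_keys P q = restrict_keys P p * g"
    unfolding P_def by (rule in_frac_t_homogeneous[OF pq(3,4) pq' assms(3)])
  ultimately show ?thesis
    using t_homogeneous_component_shift_mem_edge_ring[OF pq(1)]
      t_homogeneous_component_shift_mem_edge_ring[OF pq(2)]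
    unfolding P_def by (rule in_frac_monom_mult[rotated 2])
qed

theorem mainTheorem7:
  fixes S :: "(bool \<times> nat \<times> nat) set"
    and D :: "(nat \<times> nat) list"
    and n :: nat
    and f g :: "'k::field laurent"
  assumes "finite S"
    and "\<forall>(b,i,j)\<in>S. i \<in> {1..n} \<and> j \<in> {1..n}"
    and "distinct D"
    and "\<forall>(i,j)\<in>set D. i \<in> {1..n} \<and> j \<in> {1..n} \<and> i \<noteq> j"
    and "\<forall>v. Poly_Mapping.lookup f v \<noteq> 0 \<longrightarrow>
           (\<forall>w. Poly_Mapping.lookup v w \<noteq> 0 \<longrightarrow> w \<in> Inl ` {1..n} \<union> Inr ` {..<length D})"
    and "\<forall>v. Poly_Mapping.lookup g v \<noteq> 0 \<longrightarrow>
           (\<forall>w. Poly_Mapping.lookup v w \<noteq> 0 \<longrightarrow> w \<in> Inl ` {1..n} \<union> Inr ` {..<length D})"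
    and "g \<noteq> 0"
  shows "(in_frac (aug_edge_ring S D) f g \<and> in_frac (poly_x n) f g)
           \<longleftrightarrow> in_frac (edge_ring S D) f g"
proof
  assume "in_frac (aug_edge_ring S D) f g \<and> in_frac (poly_x n) f g"
  then show "in_frac (edge_ring S D) f g"
    using in_frac_edge_ring_of_aug_and_poly_x assms(7) by blast
next
  assume edge: "in_frac (edge_ring S D) f g"
  have "in_frac (aug_edge_ring S D) f g"
    using edge_ring_subset_aug_edge_ring edge by (rule in_frac_mono)
  moreover have "in_frac (poly_x n) f g"
    using in_frac_poly_x_of_edge_ring[OF assms(2) _ edge] assms(4) by fast
  ultimately show "in_frac (aug_edge_ring S D) f g \<and> in_frac (poly_x n) f g" ..
qed

end
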